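(* Assume $A=-2C$ and $0<H<1$, and let $D=D(\Gamma_1)=(1-H)(3H+1)$ and $m_{\Gamma_1}=\dfrac{2H}{H+\sqrt D+1}$. Define $$\Psi_2=-\frac{(H+1)(H-\sqrt D-3)}{2},\qquad \Psi_{-1}=\frac{(H^2-1)\big((H+1)\sqrt D-(H-1)^2+2\big)}{H^2},$$ $$\Psi_{-4}=\frac{(H+1)\sqrt D-(H-1)^2+2}{2},$$ and $$\tau_{\Gamma_1}=m_{\Gamma_1}^2\big(\Psi_2e^{2\pi C}+\Psi_{-1}e^{-\pi C}+\Psi_{-4}e^{-4\pi C}\big).$$ Let $M(y_0,t)$ be the matrix $$M(y_0,t)=S_{Y\to X}(p_0)\,e^{DY t}\,S_{X\to Y}(p_1)\,e^{DX t},$$ with $p_0=(x_0(y_0),y_0,0)$ and $p_1=(-y_0,-x_0(y_0),0)$. Then $$\lim_{y_0\to\infty,\ t\to\pi}\operatorname{tr}M(y_0,t)=\tau_{\Gamma_1}.$$ In particular, along symmetric cycles on this branch, whose half-return times tend to $\pi$, one has $\operatorname{tr}M\to\tau_{\Gamma_1}$ as $y_0\to\infty$.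
   Context: Setup. Fix real parameters $A\neq0$, $C$, $H$, $\Lambda$. Define $$X(x,y,z)=\big(Ax-H(((A-C)^2+1)z-\Lambda),\ \Lambda-(1+C^2)z,\ y+2Cz\big),$$ $$Y(x,y,z)=\big(-\Lambda-(1+C^2)z,\ Ay-H(((A-C)^2+1)z+\Lambda),\ x+2Cz\big).$$ $Z$ equals $X$ on $\{z\ge0\}$ and $Y$ on $\{z<0\}$. $\Gamma_1$ is the conic $G(x,y)=0$ in $\{z=0\}$, where $$G(x,y)=H(x^2+y^2)-(H+1)xy+\frac{2CH\Lambda(y-x)}{C^2+1}+\frac{\Lambda^2(H-1)}{C^2+1}.$$ With $k=C^2+1$, its branch is $$x_0(y)=\frac{(H+1)y}{2H}+\frac{C\Lambda}{k}+\sqrt{\frac{Dy^2}{4H^2}+\frac{C\Lambda(1-H)y}{Hk}+\frac{\Lambda^2(k-H)}{Hk^2}}.$$ The saltation matrices are $$S_{X\to Y}(p)=I+\frac{(Y-X)(p)e_3^T}{X_3(p)},\qquad S_{Y\to X}(p)=I-\frac{(Y-X)(p)e_3^T}{Y_3(p)},$$ with $e_3=(0,0,1)^T$. The saltation-corrected monodromy matrix of a symmetric cycle with half-return times $t_X=t_Y=T/2$ is $M(y_0,T/2)$. *)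

theory Defs
  imports "HOL-Analysis.Analysis"
begin

type_synonym mat3 = "real^3^3"

primrec mpow :: "mat3 \<Rightarrow> nat \<Rightarrow> mat3" where
  "mpow M 0 = mat 1"
| "mpow M (Suc k) = M ** mpow M k"

definition mexp :: "mat3 \<Rightarrow> mat3" where
  "mexp M = (\<Sum>k. (1 / fact k) *\<^sub>R mpow M k)"

definition Xf :: "real \<Rightarrow> real \<Rightarrow> real \<Rightarrow> real \<Rightarrow> real^3 \<Rightarrow> real^3" where
  "Xf A C H L p = vector [A * p$1 - H * (((A - C)^2 + 1) * p$3 - L),
                          L - (1 + C^2) * p$3,
                          p$2 + 2 * C * p$3]"

definition Yf :: "real \<Rightarrow> real \<Rightarrow> real \<Rightarrow> real \<Rightarrow> real^3 \<Rightarrow> real^3" where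
  "Yf A C H L p = vector [- L - (1 + C^2) * p$3,
                          A * p$2 - H * (((A - C)^2 + 1) * p$3 + L),
                          p$1 + 2 * C * p$3]"

text \<open>Jacobians DX, DY: matrices of the (constant) linear parts of the affine fields.\<close>
definition DXm :: "real \<Rightarrow> real \<Rightarrow> real \<Rightarrow> real \<Rightarrow> mat3" where
  "DXm A C H L = matrix (\<lambda>p. Xf A C H L p - Xf A C H L 0)"

definition DYm :: "real \<Rightarrow> real \<Rightarrow> real \<Rightarrow> real \<Rightarrow> mat3" where
  "DYm A C H L = matrix (\<lambda>p. Yf A C H L p - Yf A C H L 0)"

definition e3 :: "real^3" where "e3 = axis 3 1"

definition outer :: "real^3 \<Rightarrow> real^3 \<Rightarrow> mat3" where
  "outer u v = (\<chi> i j. u$i * v$j)"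

definition S_XY :: "real \<Rightarrow> real \<Rightarrow> real \<Rightarrow> real \<Rightarrow> real^3 \<Rightarrow> mat3" where
  "S_XY A C H L p = mat 1 + (1 / (Xf A C H L p)$3) *\<^sub>R outer (Yf A C H L p - Xf A C H L p) e3"

definition S_YX :: "real \<Rightarrow> real \<Rightarrow> real \<Rightarrow> real \<Rightarrow> real^3 \<Rightarrow> mat3" where
  "S_YX A C H L p = mat 1 - (1 / (Yf A C H L p)$3) *\<^sub>R outer (Yf A C H L p - Xf A C H L p) e3"

text \<open>Discriminant D(Gamma_1) and the branch x_0(y) of the conic Gamma_1.\<close>
definition Dg :: "real \<Rightarrow> real" where "Dg H = (1 - H) * (3 * H + 1)"

definition x0 :: "real \<Rightarrow> real \<Rightarrow> real \<Rightarrow> real \<Rightarrow> real" where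
  "x0 C H L y = (let k = C^2 + 1 in
      (H + 1) * y / (2 * H) + C * L / k
      + sqrt (Dg H * y^2 / (4 * H^2) + C * L * (1 - H) * y / (H * k) + L^2 * (k - H) / (H * k^2)))"

definition Mmat :: "real \<Rightarrow> real \<Rightarrow> real \<Rightarrow> real \<Rightarrow> real \<Rightarrow> real \<Rightarrow> mat3" where
  "Mmat A C H L y0 t =
     (let p0 = vector [x0 C H L y0, y0, 0] :: real^3;
          p1 = vector [- y0, - x0 C H L y0, 0] :: real^3
      in S_YX A C H L p0 ** mexp (t *\<^sub>R DYm A C H L) ** S_XY A C H L p1 ** mexp (t *\<^sub>R DXm A C H L))"

definition mG :: "real \<Rightarrow> real" where "mG H = 2 * H / (H + sqrt (Dg H) + 1)"
definition Psi2 :: "real \<Rightarrow> real" where "Psi2 H = - (H + 1) * (H - sqrt (Dg H) - 3) / 2"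
definition Psim1 :: "real \<Rightarrow> real" where
  "Psim1 H = (H^2 - 1) * ((H + 1) * sqrt (Dg H) - (H - 1)^2 + 2) / H^2"
definition Psim4 :: "real \<Rightarrow> real" where
  "Psim4 H = ((H + 1) * sqrt (Dg H) - (H - 1)^2 + 2) / 2"

definition tauG :: "real \<Rightarrow> real \<Rightarrow> real" where
  "tauG C H = (mG H)^2 * (Psi2 H * exp (2 * pi * C) + Psim1 H * exp (- pi * C) + Psim4 H * exp (- 4 * pi * C))"

end

theory Submission imports Defs begin

text \<open>For \<open>A = -2C\<close> the Jacobian \<open>DX\<close> has the real eigenvalue \<open>A\<close> and the complex pair \<open>C \<plusminus> i\<close>,
  so \<open>exp (t DX) = e\<^sup>t\<^sup>A P + e\<^sup>t\<^sup>C (cos t U + sin t V)\<close> with a rank-one spectral projector \<open>P\<close>;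
  likewise for \<open>DY\<close>. At \<open>t = \<pi>\<close> the rotation part collapses to \<open>-e\<^sup>\<pi>\<^sup>C U\<close>. Along the branch
  \<open>x\<^sub>0\<close> of \<open>\<Gamma>\<^sub>1\<close> one has \<open>y\<^sub>0 / x\<^sub>0(y\<^sub>0) \<rightarrow> m\<^sub>\<Gamma>\<^sub>1\<close> and \<open>1 / x\<^sub>0(y\<^sub>0) \<rightarrow> 0\<close>, so both saltation
  matrices converge to explicit rank-one perturbations of the identity. By continuity of the
  trace, the limit is the trace of an explicit product of four matrices, which equals
  \<open>\<tau>\<^sub>\<Gamma>\<^sub>1\<close> modulo the relations \<open>(\<surd>D)\<^sup>2 = D\<close> and \<open>m\<^sub>\<Gamma>\<^sub>1 (H + \<surd>D + 1) = 2H\<close>.\<close>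

lemma mpow_rotation_decomp:
  fixes N P U V :: mat3
  assumes P: "N ** P = \<alpha> *\<^sub>R P" and U: "N ** U = \<beta> *\<^sub>R U + \<gamma> *\<^sub>R V"
    and V: "N ** V = \<beta> *\<^sub>R V - \<gamma> *\<^sub>R U" and PU: "P + U = mat 1"
  shows "mpow N k = \<alpha>^k *\<^sub>R P + Re (Complex \<beta> \<gamma> ^ k) *\<^sub>R U + Im (Complex \<beta> \<gamma> ^ k) *\<^sub>R V"
proof (induction k)
  case 0
  then show ?case using PU by simp
next
  case (Suc k)
  have "mpow N (Suc k) =
      \<alpha>^k *\<^sub>R (N ** P) + Re (Complex \<beta> \<gamma> ^ k) *\<^sub>R (N ** U) + Im (Complex \<beta> \<gamma> ^ k) *\<^sub>R (N ** V)"
    by (simp add: Suc matrix_add_ldistrib matrix_scalar_ac scalar_matrix_assoc)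
  also have "\<dots> = \<alpha>^Suc k *\<^sub>R P + Re (Complex \<beta> \<gamma> ^ Suc k) *\<^sub>R U + Im (Complex \<beta> \<gamma> ^ Suc k) *\<^sub>R V"
    by (simp add: P U V algebra_simps)
  finally show ?case .
qed

lemma mexp_rotation_decomp:
  fixes N P U V :: mat3
  assumes "N ** P = \<alpha> *\<^sub>R P" and "N ** U = \<beta> *\<^sub>R U + \<gamma> *\<^sub>R V"
    and "N ** V = \<beta> *\<^sub>R V - \<gamma> *\<^sub>R U" and "P + U = mat 1"
  shows "mexp N = exp \<alpha> *\<^sub>R P + (exp \<beta> * cos \<gamma>) *\<^sub>R U + (exp \<beta> * sin \<gamma>) *\<^sub>R V"
proof -
  let ?z = "Complex \<beta> \<gamma>"
  have exp_z: "(\<lambda>k. ?z^k /\<^sub>R fact k) sums exp ?z" by (rule exp_converges)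
  have Re_series: "(\<lambda>k. Re (?z^k) / fact k) sums (exp \<beta> * cos \<gamma>)"
    using sums_Re[OF exp_z] by (simp add: Re_exp divide_inverse mult.commute)
  have Im_series: "(\<lambda>k. Im (?z^k) / fact k) sums (exp \<beta> * sin \<gamma>)"
    using sums_Im[OF exp_z] by (simp add: Im_exp divide_inverse mult.commute)
  have "(\<lambda>k. (\<alpha>^k / fact k) *\<^sub>R P + (Re (?z^k) / fact k) *\<^sub>R U + (Im (?z^k) / fact k) *\<^sub>R V)
     sums (exp \<alpha> *\<^sub>R P + (exp \<beta> * cos \<gamma>) *\<^sub>R U + (exp \<beta> * sin \<gamma>) *\<^sub>R V)"
    by (intro sums_add sums_scaleR_left)
      (use exp_converges[of \<alpha>] Re_series Im_series in \<open>simp_all add: divide_inverse mult.commute\<close>)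
  then show ?thesis
    unfolding mexp_def by (simp add: mpow_rotation_decomp[OF assms] scaleR_add_right sums_iff)
qed

lemma tendsto_matrix_mult:
  fixes f :: "'a \<Rightarrow> real^'n^'m" and g :: "'a \<Rightarrow> real^'p^'n"
  assumes "(f \<longlongrightarrow> a) F" "(g \<longlongrightarrow> b) F"
  shows "((\<lambda>x. f x ** g x) \<longlongrightarrow> a ** b) F"
  unfolding matrix_matrix_mult_def
  by (intro vec_tendstoI) (simp, intro tendsto_sum tendsto_mult tendsto_vec_nth assms)

lemma tendsto_trace:
  fixes f :: "'a \<Rightarrow> real^'n^'n"
  assumes "(f \<longlongrightarrow> a) F"
  shows "((\<lambda>x. trace (f x)) \<longlongrightarrow> trace a) F"
  unfolding trace_def by (intro tendsto_sum tendsto_vec_nth assms)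

lemma tendsto_outer:
  fixes u :: "'a \<Rightarrow> real^3"
  assumes "(u \<longlongrightarrow> u\<^sub>0) F"
  shows "((\<lambda>x. outer (u x) v) \<longlongrightarrow> outer u\<^sub>0 v) F"
  unfolding outer_def by (intro vec_tendstoI) (simp add: tendsto_mult_right tendsto_vec_nth assms)

lemma tendsto_vector3:
  assumes "(f \<longlongrightarrow> a) F" "(g \<longlongrightarrow> b) F" "(h \<longlongrightarrow> c) F"
  shows "((\<lambda>x. vector [f x, g x, h x] :: real^3) \<longlongrightarrow> vector [a, b, c]) F"
proof (rule vec_tendstoI)
  fix i :: 3
  show "((\<lambda>x. (vector [f x, g x, h x] :: real^3) $ i) \<longlongrightarrow> (vector [a, b, c] :: real^3) $ i) F"
    using exhaust_3[of i] assms by auto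
qed

lemma DXm_eq:
  "DXm A C H L = vector [vector [A, 0, - H * ((A - C)^2 + 1)], vector [0, 0, - (1 + C^2)], vector [0, 1, 2 * C]]"
  unfolding DXm_def matrix_def Xf_def by (simp add: vec_eq_iff forall_3 axis_def algebra_simps)

lemma DYm_eq:
  "DYm A C H L = vector [vector [0, 0, - (1 + C^2)], vector [0, A, - H * ((A - C)^2 + 1)], vector [1, 0, 2 * C]]"
  unfolding DYm_def matrix_def Yf_def by (simp add: vec_eq_iff forall_3 axis_def algebra_simps)

text \<open>For \<open>A = -2C\<close>: \<open>PX\<close> is the spectral projector of \<open>DX\<close> onto the eigenvalue \<open>A\<close>,
  \<open>UX = I - PX\<close> the projector onto the invariant plane of the eigenvalues \<open>C \<plusminus> i\<close>, and
  \<open>VX = (DX - C I) UX\<close>, so that \<open>DX\<close> acts on that plane by \<open>UX \<mapsto> C UX + VX\<close>, \<open>VX \<mapsto> C VX - UX\<close>.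
  The matrices for \<open>DY\<close> are obtained by swapping the first two coordinates.\<close>

definition PX :: "real \<Rightarrow> real \<Rightarrow> mat3" where
  "PX C H = vector [vector [1, -H, 2*C*H], vector [0,0,0], vector [0,0,0]]"
definition UX :: "real \<Rightarrow> real \<Rightarrow> mat3" where
  "UX C H = vector [vector [0, H, -2*C*H], vector [0,1,0], vector [0,0,1]]"
definition VX :: "real \<Rightarrow> real \<Rightarrow> mat3" where
  "VX C H = vector [vector [0, -3*C*H, -H*(3*C^2+1)], vector [0,-C,-(1+C^2)], vector [0,1,C]]"
definition PY :: "real \<Rightarrow> real \<Rightarrow> mat3" where
  "PY C H = vector [vector [0,0,0], vector [-H, 1, 2*C*H], vector [0,0,0]]"
definition UY :: "real \<Rightarrow> real \<Rightarrow> mat3" where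
  "UY C H = vector [vector [1,0,0], vector [H, 0, -2*C*H], vector [0,0,1]]"
definition VY :: "real \<Rightarrow> real \<Rightarrow> mat3" where
  "VY C H = vector [vector [-C, 0, -(1+C^2)], vector [-3*C*H, 0, -H*(3*C^2+1)], vector [1,0,C]]"

lemmas matrix3_simps = vec_eq_iff forall_3 matrix_matrix_mult_def sum_3 mat_def

lemma mexp_DXm:
  assumes "A = -2*C"
  shows "mexp (t *\<^sub>R DXm A C H L) =
    exp (t*A) *\<^sub>R PX C H + (exp (t*C) * cos t) *\<^sub>R UX C H + (exp (t*C) * sin t) *\<^sub>R VX C H"
proof (rule mexp_rotation_decomp)
  show "t *\<^sub>R DXm A C H L ** PX C H = (t*A) *\<^sub>R PX C H"
    by (simp add: DXm_eq PX_def matrix3_simps)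
  show "t *\<^sub>R DXm A C H L ** UX C H = (t*C) *\<^sub>R UX C H + t *\<^sub>R VX C H"
    using assms by (simp add: DXm_eq UX_def VX_def matrix3_simps; simp add: algebra_simps power2_eq_square)
  show "t *\<^sub>R DXm A C H L ** VX C H = (t*C) *\<^sub>R VX C H - t *\<^sub>R UX C H"
    using assms by (simp add: DXm_eq UX_def VX_def matrix3_simps; simp add: algebra_simps power2_eq_square)
  show "PX C H + UX C H = mat 1"
    by (simp add: PX_def UX_def matrix3_simps)
qed

lemma mexp_DYm:
  assumes "A = -2*C"
  shows "mexp (t *\<^sub>R DYm A C H L) =
    exp (t*A) *\<^sub>R PY C H + (exp (t*C) * cos t) *\<^sub>R UY C H + (exp (t*C) * sin t) *\<^sub>R VY C H"
proof (rule mexp_rotation_decomp)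
  show "t *\<^sub>R DYm A C H L ** PY C H = (t*A) *\<^sub>R PY C H"
    by (simp add: DYm_eq PY_def matrix3_simps)
  show "t *\<^sub>R DYm A C H L ** UY C H = (t*C) *\<^sub>R UY C H + t *\<^sub>R VY C H"
    using assms by (simp add: DYm_eq UY_def VY_def matrix3_simps; simp add: algebra_simps power2_eq_square)
  show "t *\<^sub>R DYm A C H L ** VY C H = (t*C) *\<^sub>R VY C H - t *\<^sub>R UY C H"
    using assms by (simp add: DYm_eq UY_def VY_def matrix3_simps; simp add: algebra_simps power2_eq_square)
  show "PY C H + UY C H = mat 1"
    by (simp add: PY_def UY_def matrix3_simps)
qed

lemma tendsto_mexp_DXm_at_pi:
  assumes "A = -2*C"
  shows "((\<lambda>t. mexp (t *\<^sub>R DXm A C H L)) \<longlongrightarrow> exp (pi*A) *\<^sub>R PX C H - exp (pi*C) *\<^sub>R UX C H) (at pi)"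
proof -
  have "((\<lambda>t. exp (t*A) *\<^sub>R PX C H + (exp (t*C) * cos t) *\<^sub>R UX C H + (exp (t*C) * sin t) *\<^sub>R VX C H)
      \<longlongrightarrow> exp (pi*A) *\<^sub>R PX C H + (exp (pi*C) * cos pi) *\<^sub>R UX C H + (exp (pi*C) * sin pi) *\<^sub>R VX C H) (at pi)"
    by (intro tendsto_intros)
  then show ?thesis by (simp add: mexp_DXm[OF assms])
qed

lemma tendsto_mexp_DYm_at_pi:
  assumes "A = -2*C"
  shows "((\<lambda>t. mexp (t *\<^sub>R DYm A C H L)) \<longlongrightarrow> exp (pi*A) *\<^sub>R PY C H - exp (pi*C) *\<^sub>R UY C H) (at pi)"
proof -
  have "((\<lambda>t. exp (t*A) *\<^sub>R PY C H + (exp (t*C) * cos t) *\<^sub>R UY C H + (exp (t*C) * sin t) *\<^sub>R VY C H)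
      \<longlongrightarrow> exp (pi*A) *\<^sub>R PY C H + (exp (pi*C) * cos pi) *\<^sub>R UY C H + (exp (pi*C) * sin pi) *\<^sub>R VY C H) (at pi)"
    by (intro tendsto_intros)
  then show ?thesis by (simp add: mexp_DYm[OF assms])
qed

lemma Dg_nonneg: "0 < H \<Longrightarrow> H < 1 \<Longrightarrow> 0 \<le> Dg H"
  unfolding Dg_def by (intro mult_nonneg_nonneg) auto

lemma H_plus_sqrt_Dg_pos: "0 < H \<Longrightarrow> H < 1 \<Longrightarrow> 0 < H + 1 + sqrt (Dg H)"
  using real_sqrt_ge_zero[OF Dg_nonneg, of H] by linarith

lemma tendsto_x0_over_y:
  assumes "0 < H" "H < 1"
  shows "((\<lambda>y. x0 C H L y / y) \<longlongrightarrow> (H + 1 + sqrt (Dg H)) / (2*H)) at_top"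
proof -
  define k where "k = C^2 + 1"
  define c1 where "c1 = C * L * (1 - H) / (H * k)"
  define c2 where "c2 = L^2 * (k - H) / (H * k^2)"
  have inv_y: "((\<lambda>y::real. 1 / y) \<longlongrightarrow> 0) at_top"
    using tendsto_inverse_0_at_top[OF filterlim_ident] by (simp add: divide_inverse)
  have "((\<lambda>y. (H+1)/(2*H) + C*L/k * (1/y) + sqrt (Dg H/(4*H^2) + c1 * (1/y) + c2 * (1/y)^2))
      \<longlongrightarrow> (H+1)/(2*H) + C*L/k * 0 + sqrt (Dg H/(4*H^2) + c1 * 0 + c2 * 0^2)) at_top"
    by (intro tendsto_intros inv_y)
  moreover have "(H+1)/(2*H) + C*L/k * 0 + sqrt (Dg H/(4*H^2) + c1 * 0 + c2 * 0^2)
      = (H + 1 + sqrt (Dg H)) / (2*H)"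
    using assms by (simp add: real_sqrt_divide real_sqrt_mult add_divide_distrib)
  moreover have "eventually (\<lambda>y. (H+1)/(2*H) + C*L/k * (1/y) + sqrt (Dg H/(4*H^2) + c1 * (1/y) + c2 * (1/y)^2)
      = x0 C H L y / y) at_top"
    using eventually_gt_at_top[of 0]
  proof eventually_elim
    case (elim y)
    have "sqrt (Dg H/(4*H^2) + c1 * (1/y) + c2 * (1/y)^2) = sqrt ((Dg H * y^2/(4*H^2) + c1 * y + c2) / y^2)"
      using elim by (simp add: field_simps power2_eq_square)
    also have "\<dots> = sqrt (Dg H * y^2/(4*H^2) + c1 * y + c2) / y"
      using elim by (simp add: real_sqrt_divide)
    finally show ?case
      unfolding x0_def Let_def k_def[symmetric] c1_def c2_def using elim by (simp add: add_divide_distrib)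
  qed
  ultimately show ?thesis using Lim_transform_eventually by fastforce
qed

lemma tendsto_y_over_x0:
  assumes "0 < H" "H < 1"
  shows "((\<lambda>y. y / x0 C H L y) \<longlongrightarrow> mG H) at_top"
proof -
  have "(H + 1 + sqrt (Dg H)) / (2*H) \<noteq> 0"
    using assms H_plus_sqrt_Dg_pos[OF assms] by simp
  then have "((\<lambda>y. inverse (x0 C H L y / y)) \<longlongrightarrow> inverse ((H + 1 + sqrt (Dg H)) / (2*H))) at_top"
    by (rule tendsto_inverse[OF tendsto_x0_over_y[OF assms]])
  then show ?thesis by (simp add: mG_def add_ac)
qed

lemma tendsto_inverse_x0:
  assumes "0 < H" "H < 1"
  shows "((\<lambda>y. 1 / x0 C H L y) \<longlongrightarrow> 0) at_top"
proof -
  have "((\<lambda>y. (1 / y) * (y / x0 C H L y)) \<longlongrightarrow> 0 * mG H) at_top"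
    using tendsto_inverse_0_at_top[OF filterlim_ident]
    by (intro tendsto_mult tendsto_y_over_x0 assms) (simp add: divide_inverse)
  moreover have "eventually (\<lambda>y. (1 / y) * (y / x0 C H L y) = 1 / x0 C H L y) at_top"
    using eventually_gt_at_top[of 0] by eventually_elim simp
  ultimately show ?thesis using Lim_transform_eventually by fastforce
qed

lemma eventually_x0_pos:
  assumes "0 < H" "H < 1"
  shows "eventually (\<lambda>y. x0 C H L y > 0) at_top"
proof -
  have "(H + 1 + sqrt (Dg H)) / (2*H) > 0"
    using assms H_plus_sqrt_Dg_pos[OF assms] by simp
  then have "eventually (\<lambda>y. x0 C H L y / y > 0) at_top"
    using order_tendstoD(1)[OF tendsto_x0_over_y[OF assms]] by blast
  then show ?thesis
    using eventually_gt_at_top[of 0] by eventually_elim (simp add: zero_less_divide_iff)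
qed

lemma S_XY_switching_point:
  assumes "x \<noteq> 0"
  shows "S_XY A C H L (vector [- y, - x, 0]) =
    mat 1 + outer (vector [(1 + H) * L * (1 / x) - A * (y / x), A + (1 + H) * L * (1 / x), y / x - 1]) e3"
  unfolding S_XY_def Xf_def Yf_def using assms
  by (simp add: vec_eq_iff forall_3 outer_def e3_def axis_def mat_def field_simps)

lemma S_YX_switching_point:
  assumes "x \<noteq> 0"
  shows "S_YX A C H L (vector [x, y, 0]) =
    mat 1 - outer (vector [- A - (1 + H) * L * (1 / x), A * (y / x) - (1 + H) * L * (1 / x), 1 - y / x]) e3"
  unfolding S_YX_def Xf_def Yf_def using assms
  by (simp add: vec_eq_iff forall_3 outer_def e3_def axis_def mat_def field_simps)

lemma tendsto_S_XY_branch: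
  assumes "0 < H" "H < 1"
  shows "((\<lambda>y. S_XY A C H L (vector [- y, - x0 C H L y, 0]))
    \<longlongrightarrow> mat 1 + outer (vector [- (A * mG H), A, mG H - 1]) e3) at_top"
proof -
  have "((\<lambda>y. mat 1 + outer (vector [(1 + H) * L * (1 / x0 C H L y) - A * (y / x0 C H L y),
        A + (1 + H) * L * (1 / x0 C H L y), y / x0 C H L y - 1]) e3)
      \<longlongrightarrow> mat 1 + outer (vector [(1 + H) * L * 0 - A * mG H, A + (1 + H) * L * 0, mG H - 1]) e3) at_top"
    by (intro tendsto_intros tendsto_outer tendsto_vector3 tendsto_y_over_x0 tendsto_inverse_x0 assms)
  then show ?thesis
    by (simp, elim Lim_transform_eventually)
      (rule eventually_mono[OF eventually_x0_pos[OF assms, of C L]], simp add: S_XY_switching_point)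
qed

lemma tendsto_S_YX_branch:
  assumes "0 < H" "H < 1"
  shows "((\<lambda>y. S_YX A C H L (vector [x0 C H L y, y, 0]))
    \<longlongrightarrow> mat 1 - outer (vector [- A, A * mG H, 1 - mG H]) e3) at_top"
proof -
  have "((\<lambda>y. mat 1 - outer (vector [- A - (1 + H) * L * (1 / x0 C H L y),
        A * (y / x0 C H L y) - (1 + H) * L * (1 / x0 C H L y), 1 - y / x0 C H L y]) e3)
      \<longlongrightarrow> mat 1 - outer (vector [- A - (1 + H) * L * 0, A * mG H - (1 + H) * L * 0, 1 - mG H]) e3) at_top"
    by (intro tendsto_intros tendsto_outer tendsto_vector3 tendsto_y_over_x0 tendsto_inverse_x0 assms)
  then show ?thesis
    by (simp, elim Lim_transform_eventually)
      (rule eventually_mono[OF eventually_x0_pos[OF assms, of C L]], simp add: S_YX_switching_point)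
qed

definition Mmat_limit :: "real \<Rightarrow> real \<Rightarrow> real \<Rightarrow> mat3" where
  "Mmat_limit A C H =
    (mat 1 - outer (vector [- A, A * mG H, 1 - mG H]) e3)
    ** (exp (pi*A) *\<^sub>R PY C H - exp (pi*C) *\<^sub>R UY C H)
    ** (mat 1 + outer (vector [- (A * mG H), A, mG H - 1]) e3)
    ** (exp (pi*A) *\<^sub>R PX C H - exp (pi*C) *\<^sub>R UX C H)"

text \<open>After expanding the trace the identity is polynomial in \<open>m = m\<^sub>\<Gamma>\<^sub>1\<close>, \<open>s = \<surd>D\<close>, \<open>e\<^sup>\<pi>\<^sup>C\<close> and
  \<open>e\<^sup>-\<^sup>2\<^sup>\<pi>\<^sup>C = e\<^sup>\<pi>\<^sup>A\<close>, and holds modulo \<open>s\<^sup>2 = D\<close> and \<open>m (H + s + 1) = 2H\<close>.\<close>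

lemma trace_Mmat_limit:
  assumes "0 < H" "H < 1" "A = -2*C"
  shows "trace (Mmat_limit A C H) = tauG C H"
proof -
  define s where "s = sqrt (Dg H)"
  define m where "m = mG H"
  define E1 where "E1 = exp (pi*C)"
  define E2 where "E2 = exp (-2*pi*C)"
  have s2: "s^2 = (1-H)*(3*H+1)"
    unfolding s_def using Dg_nonneg[OF assms(1,2)] by (simp add: Dg_def)
  have m: "m * (H + s + 1) = 2*H"
    unfolding m_def mG_def s_def using H_plus_sqrt_Dg_pos[OF assms(1,2)] by (simp add: add_ac)
  have exps: "exp (pi*A) = E2" "exp (2*pi*C) = E1^2" "exp (-pi*C) = E1*E2" "exp (-4*pi*C) = E2^2"
    unfolding E1_def E2_def assms(3) by (simp_all add: power2_eq_square mult_exp_exp)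
  have tau: "tauG C H = m^2 * (Psi2 H * E1^2 + Psim1 H * (E1*E2) + Psim4 H * E2^2)"
    unfolding tauG_def m_def exps(2-4) by simp
  show ?thesis
    unfolding Mmat_limit_def tau exps(1) E1_def[symmetric] m_def[symmetric]
    unfolding Psi2_def Psim1_def Psim4_def s_def[symmetric] assms(3)
    using assms(1) m s2
    apply (simp add: trace_def sum_3 matrix_matrix_mult_def outer_def e3_def axis_def mat_def
        PX_def UX_def PY_def UY_def)
    apply (simp add: field_simps)
    apply algebra
    done
qed

lemma tendsto_Mmat:
  assumes "A = -2*C" "0 < H" "H < 1"
  shows "((\<lambda>(y0, t). Mmat A C H L y0 t) \<longlongrightarrow> Mmat_limit A C H) (at_top \<times>\<^sub>F at pi)"
  unfolding Mmat_def Mmat_limit_def Let_def case_prod_beta using assms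
  by (intro tendsto_matrix_mult
      filterlim_compose[OF tendsto_S_YX_branch filterlim_fst]
      filterlim_compose[OF tendsto_S_XY_branch filterlim_fst]
      filterlim_compose[OF tendsto_mexp_DYm_at_pi filterlim_snd]
      filterlim_compose[OF tendsto_mexp_DXm_at_pi filterlim_snd]) simp_all

theorem mainTheorem12:
  fixes A C H L :: real
  assumes "A \<noteq> 0" and "A = - 2 * C" and "0 < H" and "H < 1"
  shows "((\<lambda>(y0, t). trace (Mmat A C H L y0 t)) \<longlongrightarrow> tauG C H) (at_top \<times>\<^sub>F at pi)"
  using tendsto_trace[OF tendsto_Mmat[OF assms(2-4), of L]]
  by (simp add: case_prod_beta' trace_Mmat_limit[OF assms(3,4,2)])

end
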